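(* Let $K$ be a valued field and $d\ge1$. For any $d+2$ points $x_1,\dots,x_{d+2}\in K^d$ (not necessarily distinct), there is $i\in\{1,\dots,d+2\}$ such that $x_i\in\operatorname{conv}(\{x_j: j\ne i\})$.
   Context: $K$ is a field with a valuation $\nu:K\to\Gamma\cup\{\infty\}$ and valuation ring $\mathcal{O}=\{x:\nu(x)\ge 0\}$. For $Y\subseteq K^d$, $\operatorname{conv}(Y)=\{\sum_{i=1}^n\alpha_iy_i: n\ge1, y_i\in Y,\alpha_i\in\mathcal{O},\sum_i\alpha_i=1\}$ (the smallest convex set containing $Y$, where a set is convex if closed under all such combinations). *)

theory Defs
  imports "HOL-Analysis.Finite_Cartesian_Product"
begin

text \<open>A (Krull) valuation on a field K with values in an ordered abelian group
  \<Gamma> together with \<infinity>; the value \<infinity> is represented by None.\<close>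
definition valuation :: "('a::field \<Rightarrow> 'g::linordered_ab_group_add option) \<Rightarrow> bool" where
  "valuation \<nu> \<longleftrightarrow>
     (\<forall>x. \<nu> x = None \<longleftrightarrow> x = 0) \<and>
     (\<forall>x y. x \<noteq> 0 \<longrightarrow> y \<noteq> 0 \<longrightarrow> \<nu> (x * y) = Some (the (\<nu> x) + the (\<nu> y))) \<and>
     (\<forall>x y. x \<noteq> 0 \<longrightarrow> y \<noteq> 0 \<longrightarrow> x + y \<noteq> 0 \<longrightarrow>
        min (the (\<nu> x)) (the (\<nu> y)) \<le> the (\<nu> (x + y)))"

definition val_ring :: "('a::field \<Rightarrow> 'g::linordered_ab_group_add option) \<Rightarrow> 'a set" where
  "val_ring \<nu> = {x. \<nu> x = None \<or> (\<exists>g. \<nu> x = Some g \<and> 0 \<le> g)}"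

definition vconv :: "('a::field \<Rightarrow> 'g::linordered_ab_group_add option) \<Rightarrow> ('a^'n) set \<Rightarrow> ('a^'n) set" where
  "vconv \<nu> Y = {z. \<exists>n::nat. n \<ge> 1 \<and> (\<exists>y \<alpha>. (\<forall>i<n. y i \<in> Y \<and> \<alpha> i \<in> val_ring \<nu>) \<and>
        (\<Sum>i<n. \<alpha> i) = 1 \<and> z = (\<Sum>i<n. \<alpha> i *s y i))}"

end

theory Submission imports Defs "HOL-Analysis.Cartesian_Space" begin

text \<open>Any \<open>d + 2\<close> points of \<open>K\<^sup>d\<close> are affinely dependent:
  \<open>\<Sum>\<^sub>j \<lambda>\<^sub>j x\<^sub>j = 0\<close> and \<open>\<Sum>\<^sub>j \<lambda>\<^sub>j = 0\<close> with some \<open>\<lambda>\<^sub>j \<noteq> 0\<close>. Choose \<open>i\<close> such that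
  \<open>\<lambda>\<^sub>i \<noteq> 0\<close> has minimal valuation. Then \<open>x\<^sub>i = \<Sum>\<^sub>j\<^sub>\<noteq>\<^sub>i (-\<lambda>\<^sub>j/\<lambda>\<^sub>i) x\<^sub>j\<close>, where the
  coefficients sum to 1 and, by minimality, have nonnegative valuation.\<close>

lemma valuation_Some:
  assumes "valuation \<nu>" and "x \<noteq> 0"
  shows "\<nu> x = Some (the (\<nu> x))"
  using assms unfolding valuation_def by auto

lemma valuation_mult:
  assumes "valuation \<nu>" and "x \<noteq> 0" and "y \<noteq> 0"
  shows "the (\<nu> (x * y)) = the (\<nu> x) + the (\<nu> y)"
  using assms unfolding valuation_def by simp

lemma valuation_one:
  fixes \<nu> :: "'a::field \<Rightarrow> 'g::linordered_ab_group_add option"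
  assumes "valuation \<nu>"
  shows "the (\<nu> 1) = 0"
  using valuation_mult[OF assms, of 1 1] by simp

lemma valuation_minus_one:
  fixes \<nu> :: "'a::field \<Rightarrow> 'g::linordered_ab_group_add option"
  assumes "valuation \<nu>"
  shows "the (\<nu> (-1)) = 0"
proof -
  have "the (\<nu> (-1)) + the (\<nu> (-1)) = 0"
    using valuation_mult[OF assms, of "-1" "-1"] valuation_one[OF assms] by simp
  then show ?thesis
    by (metis add_neg_neg add_pos_pos less_irrefl linorder_neqE)
qed

lemma valuation_uminus:
  assumes "valuation \<nu>" and "x \<noteq> 0"
  shows "the (\<nu> (- x)) = the (\<nu> x)"
  using valuation_mult[OF assms(1), of "-1" x] assms valuation_minus_one[OF assms(1)] by simp

lemma valuation_divide:
  assumes "valuation \<nu>" and "x \<noteq> 0" and "y \<noteq> 0"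
  shows "the (\<nu> (x / y)) = the (\<nu> x) - the (\<nu> y)"
  using valuation_mult[OF assms(1), of "x / y" y] assms by (simp add: eq_diff_eq)

lemma zero_in_val_ring: "valuation \<nu> \<Longrightarrow> 0 \<in> val_ring \<nu>"
  unfolding val_ring_def valuation_def by simp

lemma divide_in_val_ring:
  assumes "valuation \<nu>" and "y \<noteq> 0" and "x \<noteq> 0 \<Longrightarrow> the (\<nu> y) \<le> the (\<nu> x)"
  shows "x / y \<in> val_ring \<nu>"
proof (cases "x = 0")
  case True
  then show ?thesis using zero_in_val_ring[OF assms(1)] by simp
next
  case False
  then have "\<nu> (x / y) = Some (the (\<nu> x) - the (\<nu> y))"
    using assms valuation_Some[OF assms(1), of "x / y"] valuation_divide[OF assms(1)] by simp
  then show ?thesis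
    unfolding val_ring_def using assms(3)[OF False] by auto
qed

lemma vec_family_dependent:
  fixes v :: "nat \<Rightarrow> 'a::field^'n"
  assumes "CARD('n) < N"
  shows "\<exists>c. (\<Sum>j<N. c j *s v j) = 0 \<and> (\<exists>j<N. c j \<noteq> 0)"
proof (cases "inj_on v {..<N}")
  case False
  then obtain i k where ik: "i < N" "k < N" "i \<noteq> k" "v i = v k"
    unfolding inj_on_def by auto
  define c :: "nat \<Rightarrow> 'a" where "c j = (if j = i then 1 else if j = k then -1 else 0)" for j
  have "c j *s v j = (if j = i then v i else 0) - (if j = k then v k else 0)" for j
    using ik by (auto simp: c_def)
  then have "(\<Sum>j<N. c j *s v j) = v i - v k"
    using ik by (simp add: sum_subtractf)
  then show ?thesis
    using ik by (intro exI[of _ c]) (auto simp: c_def)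
next
  case True
  let ?S = "v ` {..<N}"
  have "vec.dim ?S \<le> CARD('n)"
    by (metis vec.dim_subset subset_UNIV vec.dim_UNIV card_cart_basis)
  moreover have "card ?S = N"
    using True card_image by fastforce
  ultimately have "vec.dependent ?S"
    using assms by (intro vec.dependent_biggerset_general) auto
  then obtain u where u: "\<exists>w\<in>?S. u w \<noteq> 0" "(\<Sum>w\<in>?S. u w *s w) = 0"
    using vec.dependent_finite[of ?S] by auto
  have "(\<Sum>j<N. u (v j) *s v j) = 0"
    using u(2) sum.reindex[OF True, of "\<lambda>w. u w *s w"] by simp
  then show ?thesis
    using u(1) by (intro exI[of _ "u \<circ> v"]) auto
qed

lemma vec_family_affinely_dependent:
  fixes x :: "nat \<Rightarrow> 'a::field^'n"
  assumes "CARD('n) + 1 < N"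
  shows "\<exists>l. (\<Sum>j<N. l j) = 0 \<and> (\<Sum>j<N. l j *s x j) = 0 \<and> (\<exists>j<N. l j \<noteq> 0)"
proof -
  obtain M where N: "N = Suc M" and M: "CARD('n) < M"
    using assms by (metis Suc_eq_plus1 Suc_lessE)
  obtain c where c: "(\<Sum>k<M. c k *s (x (Suc k) - x 0)) = 0" "\<exists>k<M. c k \<noteq> 0"
    using vec_family_dependent[OF M, where v = "\<lambda>k. x (Suc k) - x 0"] by blast
  define l where "l j = (if j = 0 then - (\<Sum>k<M. c k) else c (j - 1))" for j
  have "(\<Sum>j<N. l j) = 0"
    unfolding N sum.lessThan_Suc_shift by (simp add: l_def)
  moreover have "(\<Sum>j<N. l j *s x j) = (\<Sum>k<M. c k *s (x (Suc k) - x 0))"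
    unfolding N sum.lessThan_Suc_shift
    by (simp add: l_def vec.scale_right_diff_distrib sum_subtractf vec.scale_sum_left
        vec.scale_minus_left del: sum.lessThan_Suc)
  moreover have "\<exists>j<N. l j \<noteq> 0"
  proof -
    obtain k where "k < M" "c k \<noteq> 0"
      using c(2) by blast
    then show ?thesis
      using N by (intro exI[of _ "Suc k"]) (simp add: l_def)
  qed
  ultimately show ?thesis
    using c(1) by (intro exI[of _ l]) simp
qed

lemma exists_min_valuation:
  fixes l :: "nat \<Rightarrow> 'a::field" and \<nu> :: "'a \<Rightarrow> 'g::linordered_ab_group_add option"
  assumes "\<exists>j<N. l j \<noteq> 0"
  shows "\<exists>i<N. l i \<noteq> 0 \<and> (\<forall>j<N. l j \<noteq> 0 \<longrightarrow> the (\<nu> (l i)) \<le> the (\<nu> (l j)))"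
proof -
  define M where "M = {the (\<nu> (l j)) | j. j < N \<and> l j \<noteq> 0}"
  have "finite M" and "M \<noteq> {}"
    using assms unfolding M_def by auto
  then have "Min M \<in> M" by simp
  then obtain i where i: "i < N" "l i \<noteq> 0" "the (\<nu> (l i)) = Min M"
    unfolding M_def by auto
  have "the (\<nu> (l i)) \<le> the (\<nu> (l j))" if "j < N" "l j \<noteq> 0" for j
  proof -
    have "the (\<nu> (l j)) \<in> M"
      unfolding M_def using that by blast
    then show ?thesis
      using Min_le[OF \<open>finite M\<close>] i(3) by simp
  qed
  then show ?thesis
    using i by blast
qed

lemma mem_vconv_of_affine_dependence:
  fixes \<nu> :: "'a::field \<Rightarrow> 'g::linordered_ab_group_add option" and x :: "nat \<Rightarrow> 'a^'n"
  assumes val: "valuation \<nu>" and i: "i < N" and li: "l i \<noteq> 0"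
    and sum_l: "(\<Sum>j<N. l j) = 0" and sum_lx: "(\<Sum>j<N. l j *s x j) = 0"
    and min: "\<And>j. j < N \<Longrightarrow> l j \<noteq> 0 \<Longrightarrow> the (\<nu> (l i)) \<le> the (\<nu> (l j))"
  shows "x i \<in> vconv \<nu> {x j | j. j < N \<and> j \<noteq> i}"
proof -
  let ?J = "{..<N} - {i}"
  have split: "(\<Sum>k<N. f k) = f i + (\<Sum>k\<in>?J. f k)" for f :: "nat \<Rightarrow> 'b::comm_monoid_add"
    using i by (metis finite_lessThan lessThan_iff sum.remove)
  have sum_J: "(\<Sum>k\<in>?J. l k) = - l i"
    using split[of l] sum_l by (simp add: eq_neg_iff_add_eq_0 add.commute)
  then obtain j0 where j0: "j0 < N" "j0 \<noteq> i"
    using li by (metis DiffE lessThan_iff singletonI sum.not_neutral_contains_not_neutral neg_0_equal_iff_equal)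
  \<comment> \<open>the point in slot \<open>i\<close> is a dummy with coefficient 0\<close>
  define y where "y k = (if k = i then x j0 else x k)" for k
  define \<alpha> where "\<alpha> k = (if k = i then 0 else - l k / l i)" for k
  have Y: "\<forall>k<N. y k \<in> {x j | j. j < N \<and> j \<noteq> i}"
    using j0 unfolding y_def by auto
  have R: "\<alpha> k \<in> val_ring \<nu>" if "k < N" for k
    using that zero_in_val_ring[OF val] divide_in_val_ring[OF val li, of "- l k"]
      min valuation_uminus[OF val]
    unfolding \<alpha>_def by auto
  have "(\<Sum>k<N. \<alpha> k) = - (\<Sum>k\<in>?J. l k) / l i"
    using split[of \<alpha>] unfolding \<alpha>_def by (simp add: sum_divide_distrib sum_negf)
  then have S1: "(\<Sum>k<N. \<alpha> k) = 1"
    using li sum_J by simp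
  have "(\<Sum>k<N. \<alpha> k *s y k) = (\<Sum>k\<in>?J. (- l k / l i) *s x k)"
    using split[of "\<lambda>k. \<alpha> k *s y k"] unfolding \<alpha>_def y_def by (auto intro!: sum.cong)
  also have "\<dots> = (- 1 / l i) *s (\<Sum>k\<in>?J. l k *s x k)"
    by (simp add: vector_scalar_mult_def sum_distrib_left vec_eq_iff sum_component mult.assoc
        cong: sum.cong)
  also have "(\<Sum>k\<in>?J. l k *s x k) = - (l i *s x i)"
    using split[of "\<lambda>k. l k *s x k"] sum_lx by (simp add: eq_neg_iff_add_eq_0 add.commute)
  finally have S2: "(\<Sum>k<N. \<alpha> k *s y k) = x i"
    using li by (simp add: vec_eq_iff)
  show ?thesis
    unfolding vconv_def using i Y R S1 S2
    by (intro CollectI exI[of _ N] conjI) (auto intro!: exI[of _ y] exI[of _ \<alpha>])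
qed

theorem proposition2p7:
  fixes \<nu> :: "'a::field \<Rightarrow> 'g::linordered_ab_group_add option"
    and x :: "nat \<Rightarrow> 'a^'n"
  assumes "valuation \<nu>"
  shows "\<exists>i<CARD('n) + 2. x i \<in> vconv \<nu> {x j | j. j < CARD('n) + 2 \<and> j \<noteq> i}"
proof -
  obtain l where l: "(\<Sum>j<CARD('n) + 2. l j) = 0" "(\<Sum>j<CARD('n) + 2. l j *s x j) = 0"
      "\<exists>j<CARD('n) + 2. l j \<noteq> 0"
    using vec_family_affinely_dependent[of "CARD('n) + 2" x] by auto
  obtain i where "i < CARD('n) + 2" "l i \<noteq> 0"
      "\<And>j. j < CARD('n) + 2 \<Longrightarrow> l j \<noteq> 0 \<Longrightarrow> the (\<nu> (l i)) \<le> the (\<nu> (l j))"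
    using exists_min_valuation[OF l(3), of \<nu>] by blast
  then show ?thesis
    using mem_vconv_of_affine_dependence[OF assms _ _ l(1,2)] by blast
qed

end
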